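(* Let $n\ge 1$ and let $\Psi:[0,1]^4\to\mathbb{R}_+$ be a performance metric that satisfies TP monotonicity (defined in the context). Then $\Psi$ satisfies the probability ranking principle: for any set $\mathbf{x}=\{x_1,\dots,x_n\}$ of instances and any conditional label distribution of the form $\mathbb{P}(\mathbf{y}\mid\mathbf{x})=\prod_{i=1}^n \eta_i^{y_i}(1-\eta_i)^{1-y_i}$ with $\eta_i=\mathbb{P}(Y=1\mid x_i)\in[0,1]$, every maximizer $\mathbf{s}^*\in\arg\max_{\mathbf{s}\in\{0,1\}^n}U_\Psi(\mathbf{s};\mathbb{P})$ satisfies \[\min\{\eta_i : s_i^*=1\}\ \ge\ \max\{\eta_i : s_i^*=0\}.\]
   Context: Labels are binary, $\mathcal{Y}=\{0,1\}$, and instance–label pairs are drawn i.i.d. from a distribution $\mathbb{P}$, so that given instances $\mathbf{x}$ the labels are conditionally independent with $\mathbb{P}(Y=1\mid x_i)=\eta_i$. For predictions $\mathbf{s}\in\{0,1\}^n$ and labels $\mathbf{y}\in\{0,1\}^n$ the empirical confusion matrix has entries $\widehat{TP}=\frac1n\sum_i s_iy_i$, $\widehat{TN}=\frac1n\sum_i(1-s_i)(1-y_i)$, $\widehat{FP}=\frac1n\sum_i s_i(1-y_i)$, $\widehat{FN}=\frac1n\sum_i(1-s_i)y_i$. A metric $\Psi:[0,1]^4\to\mathbb{R}_+$ is evaluated on these four entries, written $\Psi(\mathbf{s},\mathbf{y})$. The (decision-theoretic) utility is $U_\Psi(\mathbf{s};\mathbb{P})=\mathbb{E}_{\mathbf{y}\sim\mathbb{P}(\cdot\mid\mathbf{x})}\Psi(\mathbf{s},\mathbf{y})$.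 Writing $u=\widehat{TP}(\mathbf{s},\mathbf{y})$, $v=v(\mathbf{s})=\frac1n\sum_i s_i$, $p=p(\mathbf{y})=\frac1n\sum_i y_i$, the confusion matrix is determined by $(u,v,p)$ (namely $\widehat{FP}=v-u$, $\widehat{FN}=p-u$, $\widehat{TN}=1-v-p+u$), so there is a function $\Phi:[0,1]^3\to\mathbb{R}_+$ with $\Psi(\mathbf{s},\mathbf{y})=\Phi(\widehat{TP}(\mathbf{s},\mathbf{y}),v(\mathbf{s}),p(\mathbf{y}))$. $\Psi$ is called TP monotonic if whenever $u_1>u_2$ and $v,p$ are fixed, $\Phi(u_1,v,p)>\Phi(u_2,v,p)$. *)

theory Defs
  imports Complex_Main
begin

definition emp_TP :: "nat \<Rightarrow> bool list \<Rightarrow> bool list \<Rightarrow> real" where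
  "emp_TP n s y = (\<Sum>i<n. if s!i \<and> y!i then 1 else 0) / real n"

definition emp_TN :: "nat \<Rightarrow> bool list \<Rightarrow> bool list \<Rightarrow> real" where
  "emp_TN n s y = (\<Sum>i<n. if \<not> s!i \<and> \<not> y!i then 1 else 0) / real n"

definition emp_FP :: "nat \<Rightarrow> bool list \<Rightarrow> bool list \<Rightarrow> real" where
  "emp_FP n s y = (\<Sum>i<n. if s!i \<and> \<not> y!i then 1 else 0) / real n"

definition emp_FN :: "nat \<Rightarrow> bool list \<Rightarrow> bool list \<Rightarrow> real" where
  "emp_FN n s y = (\<Sum>i<n. if \<not> s!i \<and> y!i then 1 else 0) / real n"

definition metric_eval ::
  "(real \<Rightarrow> real \<Rightarrow> real \<Rightarrow> real \<Rightarrow> real) \<Rightarrow> nat \<Rightarrow> bool list \<Rightarrow> bool list \<Rightarrow> real" where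
  "metric_eval Psi n s y = Psi (emp_TP n s y) (emp_TN n s y) (emp_FP n s y) (emp_FN n s y)"

definition label_prob :: "(nat \<Rightarrow> real) \<Rightarrow> nat \<Rightarrow> bool list \<Rightarrow> real" where
  "label_prob eta n y = (\<Prod>i<n. if y!i then eta i else 1 - eta i)"

definition utility ::
  "(real \<Rightarrow> real \<Rightarrow> real \<Rightarrow> real \<Rightarrow> real) \<Rightarrow> (nat \<Rightarrow> real) \<Rightarrow> nat \<Rightarrow> bool list \<Rightarrow> real" where
  "utility Psi eta n s = (\<Sum>y\<in>{ys. length ys = n}. label_prob eta n y * metric_eval Psi n s y)"

definition Phi :: "(real \<Rightarrow> real \<Rightarrow> real \<Rightarrow> real \<Rightarrow> real) \<Rightarrow> real \<Rightarrow> real \<Rightarrow> real \<Rightarrow> real" where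
  "Phi Psi u v p = Psi u (1 - v - p + u) (v - u) (p - u)"

definition valid_uvp :: "real \<Rightarrow> real \<Rightarrow> real \<Rightarrow> bool" where
  "valid_uvp u v p \<longleftrightarrow> u \<in> {0..1} \<and> 1 - v - p + u \<in> {0..1} \<and> v - u \<in> {0..1} \<and> p - u \<in> {0..1}"

definition TP_monotonic :: "(real \<Rightarrow> real \<Rightarrow> real \<Rightarrow> real \<Rightarrow> real) \<Rightarrow> bool" where
  "TP_monotonic Psi \<longleftrightarrow>
     (\<forall>u1 u2 v p. valid_uvp u1 v p \<and> valid_uvp u2 v p \<and> u1 > u2 \<longrightarrow> Phi Psi u1 v p > Phi Psi u2 v p)"

end

theory Submission
  imports Defs
begin

text \<open>An exchange argument. Suppose s!i, \<not> s!j and eta i < eta j, and let tau be the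
  transposition of i and j. The confusion matrix is invariant under permuting predictions and
  labels simultaneously, so U(tau s) - U(s) = \<Sum>y (P(tau y) - P(y)) Psi(s, y); pairing y with
  tau y turns twice this sum into \<Sum>y (P(tau y) - P(y)) (Psi(s, y) - Psi(s, tau y)).
  Terms with y!i = y!j vanish. If y!i and \<not> y!j, the first factor is (eta j - eta i) times
  the probability of the remaining labels, and the second is positive by TP monotonicity,
  because swapping the labels removes exactly one true positive and keeps the number of
  positive labels. One label vector with positive probability then makes U(tau s) > U(s),
  contradicting the maximality of s.\<close>

definition pos_frac :: "nat \<Rightarrow> bool list \<Rightarrow> real" where
  "pos_frac n y = (\<Sum>k<n. if y!k then 1 else 0) / real n"

lemma count_frac_in_unit:
  assumes "n \<ge> 1"
  shows "(\<Sum>k<n. if P k then 1 else 0 :: real) / real n \<in> {0..1}"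
proof -
  have "(\<Sum>k<n. if P k then 1 else 0 :: real) \<le> real n"
    using sum_bounded_above[of "{..<n}" "\<lambda>k. if P k then 1 else 0 :: real" 1] by simp
  then show ?thesis
    using assms by (auto simp: sum_nonneg divide_le_eq_1)
qed

lemma emp_TN_eq:
  assumes "n \<ge> 1"
  shows "emp_TN n s y = 1 - pos_frac n s - pos_frac n y + emp_TP n s y"
proof -
  have "(\<Sum>k<n. if \<not> s!k \<and> \<not> y!k then 1 else 0 :: real)
      = (\<Sum>k<n. 1 - (if s!k then 1 else 0) - (if y!k then 1 else 0) + (if s!k \<and> y!k then 1 else 0))"
    by (rule sum.cong) auto
  also have "\<dots> = real n - (\<Sum>k<n. if s!k then 1 else 0) - (\<Sum>k<n. if y!k then 1 else 0)
      + (\<Sum>k<n. if s!k \<and> y!k then 1 else 0)"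
    by (simp add: sum.distrib sum_subtractf)
  finally show ?thesis
    using assms unfolding emp_TN_def emp_TP_def pos_frac_def
    by (simp add: add_divide_distrib diff_divide_distrib)
qed

lemma emp_FP_eq:
  assumes "n \<ge> 1"
  shows "emp_FP n s y = pos_frac n s - emp_TP n s y"
proof -
  have "(\<Sum>k<n. if s!k \<and> \<not> y!k then 1 else 0 :: real)
      = (\<Sum>k<n. (if s!k then 1 else 0) - (if s!k \<and> y!k then 1 else 0))"
    by (rule sum.cong) auto
  then show ?thesis
    using assms unfolding emp_FP_def emp_TP_def pos_frac_def
    by (simp add: sum_subtractf field_simps)
qed

lemma emp_FN_eq:
  assumes "n \<ge> 1"
  shows "emp_FN n s y = pos_frac n y - emp_TP n s y"
proof -
  have "(\<Sum>k<n. if \<not> s!k \<and> y!k then 1 else 0 :: real)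
      = (\<Sum>k<n. (if y!k then 1 else 0) - (if s!k \<and> y!k then 1 else 0))"
    by (rule sum.cong) auto
  then show ?thesis
    using assms unfolding emp_FN_def emp_TP_def pos_frac_def
    by (simp add: sum_subtractf field_simps)
qed

lemma metric_eval_eq_Phi:
  assumes "n \<ge> 1"
  shows "metric_eval Psi n s y = Phi Psi (emp_TP n s y) (pos_frac n s) (pos_frac n y)"
  using assms by (simp add: metric_eval_def Phi_def emp_TN_eq emp_FP_eq emp_FN_eq)

lemma valid_uvp_emp_TP:
  assumes "n \<ge> 1"
  shows "valid_uvp (emp_TP n s y) (pos_frac n s) (pos_frac n y)"
  using count_frac_in_unit[OF assms]
  unfolding valid_uvp_def emp_TN_eq[OF assms, symmetric] emp_FP_eq[OF assms, symmetric]
    emp_FN_eq[OF assms, symmetric]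
  by (simp add: emp_TP_def emp_TN_def emp_FP_def emp_FN_def)

definition swap_entries :: "nat \<Rightarrow> nat \<Rightarrow> 'a list \<Rightarrow> 'a list" where
  "swap_entries i j xs = xs[i := xs!j, j := xs!i]"

lemma length_swap_entries [simp]: "length (swap_entries i j xs) = length xs"
  by (simp add: swap_entries_def)

lemma nth_swap_entries:
  assumes "i < length xs" "j < length xs" "k < length xs"
  shows "swap_entries i j xs ! k = xs ! (if k = i then j else if k = j then i else k)"
  using assms by (simp add: swap_entries_def nth_list_update)

lemma swap_entries_involutory:
  assumes "i < length xs" "j < length xs"
  shows "swap_entries i j (swap_entries i j xs) = xs"
  using assms by (intro nth_equalityI) (simp_all add: nth_swap_entries)

lemma swap_entries_eq_self:
  assumes "i < length xs" "j < length xs" "xs!i = xs!j"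
  shows "swap_entries i j xs = xs"
  using assms by (intro nth_equalityI) (simp_all add: nth_swap_entries)

lemma sum_swap_entries_pair:
  assumes "i < n" "j < n" "length s = n" "length y = n"
  shows "(\<Sum>k<n. f (swap_entries i j s ! k) (swap_entries i j y ! k)) = (\<Sum>k<n. f (s!k) (y!k))"
proof -
  define t where "t k = (if k = i then j else if k = j then i else k)" for k
  have "(\<Sum>k<n. f (swap_entries i j s ! k) (swap_entries i j y ! k)) = (\<Sum>k<n. f (s ! t k) (y ! t k))"
    using assms by (intro sum.cong) (simp_all add: nth_swap_entries t_def)
  also have "\<dots> = (\<Sum>k<n. f (s!k) (y!k))"
    by (rule sum.reindex_bij_witness[of _ t t]) (use assms in \<open>auto simp: t_def\<close>)
  finally show ?thesis .
qed

lemma metric_eval_swap_entries: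
  assumes "i < n" "j < n" "length s = n" "length y = n"
  shows "metric_eval Psi n (swap_entries i j s) (swap_entries i j y) = metric_eval Psi n s y"
  unfolding metric_eval_def emp_TP_def emp_TN_def emp_FP_def emp_FN_def
  using sum_swap_entries_pair[OF assms, of "\<lambda>a b. if a \<and> b then 1 else 0 :: real"]
    sum_swap_entries_pair[OF assms, of "\<lambda>a b. if \<not> a \<and> \<not> b then 1 else 0 :: real"]
    sum_swap_entries_pair[OF assms, of "\<lambda>a b. if a \<and> \<not> b then 1 else 0 :: real"]
    sum_swap_entries_pair[OF assms, of "\<lambda>a b. if \<not> a \<and> b then 1 else 0 :: real"]
  by simp

lemma pos_frac_swap_entries:
  assumes "i < n" "j < n" "length y = n"
  shows "pos_frac n (swap_entries i j y) = pos_frac n y"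
  using sum_swap_entries_pair[OF assms(1-3,3), of "\<lambda>_ b. if b then 1 else 0 :: real"]
  by (simp add: pos_frac_def)

lemma emp_TP_swap_labels:
  assumes "i < n" "j < n" "i \<noteq> j" "length s = n" "length y = n"
    and "s!i" "\<not> s!j" "y!i" "\<not> y!j"
  shows "emp_TP n s (swap_entries i j y) = emp_TP n s y - 1 / real n"
proof -
  let ?y' = "swap_entries i j y"
  have "(\<Sum>k<n. if s!k \<and> y!k then 1 else 0 :: real)
      = (\<Sum>k<n. (if s!k \<and> ?y'!k then 1 else 0) + (if k = i then 1 else 0))"
    using assms by (intro sum.cong) (auto simp: nth_swap_entries)
  also have "\<dots> = (\<Sum>k<n. if s!k \<and> ?y'!k then 1 else 0) + 1"
    using assms(1) by (simp add: sum.distrib)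
  finally show ?thesis
    unfolding emp_TP_def by (simp add: add_divide_distrib)
qed

lemma metric_eval_swap_labels_less:
  assumes "n \<ge> 1" "TP_monotonic Psi" "i < n" "j < n" "i \<noteq> j" "length s = n" "length y = n"
    and "s!i" "\<not> s!j" "y!i" "\<not> y!j"
  shows "metric_eval Psi n s (swap_entries i j y) < metric_eval Psi n s y"
proof -
  let ?y' = "swap_entries i j y"
  have "pos_frac n ?y' = pos_frac n y"
    using assms by (simp add: pos_frac_swap_entries)
  moreover have "emp_TP n s ?y' < emp_TP n s y"
    using emp_TP_swap_labels[OF assms(3-11)] assms(1) by simp
  ultimately show ?thesis
    using assms(2) valid_uvp_emp_TP[OF assms(1), of s y] valid_uvp_emp_TP[OF assms(1), of s ?y']
    unfolding TP_monotonic_def metric_eval_eq_Phi[OF assms(1)] by auto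
qed

lemma label_prob_swap_labels:
  assumes "i < n" "j < n" "i \<noteq> j" "length y = n" "y!i" "\<not> y!j"
  shows "label_prob eta n (swap_entries i j y) - label_prob eta n y
       = (eta j - eta i) * (\<Prod>k\<in>{..<n} - {i, j}. if y!k then eta k else 1 - eta k)"
proof -
  have split: "label_prob eta n z = (if z!i then eta i else 1 - eta i) * (if z!j then eta j else 1 - eta j)
      * (\<Prod>k\<in>{..<n} - {i, j}. if z!k then eta k else 1 - eta k)" for z
  proof -
    let ?f = "\<lambda>k. if z!k then eta k else 1 - eta k"
    have "label_prob eta n z = ?f i * prod ?f ({..<n} - {i})"
      unfolding label_prob_def using assms(1) by (simp add: prod.remove)
    also have "prod ?f ({..<n} - {i}) = ?f j * prod ?f ({..<n} - {i} - {j})"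
      using assms(2,3) by (intro prod.remove) auto
    also have "{..<n} - {i} - {j} = {..<n} - {i, j}" by auto
    finally show ?thesis by (simp add: mult.assoc)
  qed
  have "(\<Prod>k\<in>{..<n} - {i, j}. if swap_entries i j y ! k then eta k else 1 - eta k)
      = (\<Prod>k\<in>{..<n} - {i, j}. if y!k then eta k else 1 - eta k)"
    using assms by (intro prod.cong) (auto simp: nth_swap_entries)
  moreover have "swap_entries i j y ! i = y!j"
    "swap_entries i j y ! j = y!i"
    using assms by (simp_all add: nth_swap_entries)
  ultimately show ?thesis
    using assms(5,6) unfolding split[of y] split[of "swap_entries _ _ y"] by (simp add: algebra_simps)
qed

lemma exchange_term_sgn:
  assumes "n \<ge> 1" "TP_monotonic Psi" "i < n" "j < n" "i \<noteq> j" "length s = n" "length y = n"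
    and "s!i" "\<not> s!j" "y!i" "\<not> y!j"
  shows "sgn ((label_prob eta n (swap_entries i j y) - label_prob eta n y)
            * (metric_eval Psi n s y - metric_eval Psi n s (swap_entries i j y)))
       = sgn ((eta j - eta i) * (\<Prod>k\<in>{..<n} - {i, j}. if y!k then eta k else 1 - eta k))"
  using metric_eval_swap_labels_less[OF assms]
  by (simp add: label_prob_swap_labels[OF assms(3-5,7,10,11)] sgn_mult)

lemma exchange_term_nonneg:
  assumes "n \<ge> 1" "TP_monotonic Psi" "\<forall>k<n. eta k \<in> {0..1}" "eta i \<le> eta j"
    and "i < n" "j < n" "i \<noteq> j" "length s = n" "length y = n" "s!i" "\<not> s!j"
  shows "0 \<le> (label_prob eta n (swap_entries i j y) - label_prob eta n y)
            * (metric_eval Psi n s y - metric_eval Psi n s (swap_entries i j y))"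
proof -
  let ?\<tau> = "swap_entries i j"
  let ?G = "\<lambda>z. (label_prob eta n (?\<tau> z) - label_prob eta n z)
            * (metric_eval Psi n s z - metric_eval Psi n s (?\<tau> z))"
  have true_false: "0 \<le> ?G z" if "length z = n" "z!i" "\<not> z!j" for z
  proof -
    have "0 \<le> (\<Prod>k\<in>{..<n} - {i, j}. if z!k then eta k else 1 - eta k)"
      using assms(3) by (intro prod_nonneg) auto
    then have "0 \<le> (eta j - eta i) * (\<Prod>k\<in>{..<n} - {i, j}. if z!k then eta k else 1 - eta k)"
      using assms(4) by (intro mult_nonneg_nonneg) simp_all
    then show ?thesis
      using exchange_term_sgn[OF assms(1,2,5-8) that(1) assms(10,11) that(2,3), of eta]
      by (metis zero_le_sgn_iff)
  qed
  consider "y!i = y!j" | "y!i" "\<not> y!j" | "\<not> y!i" "y!j" by blast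
  then show ?thesis
  proof cases
    case 1
    then show ?thesis
      using assms by (simp add: swap_entries_eq_self)
  next
    case 2
    then show ?thesis using true_false assms(9) by blast
  next
    case 3
    have "?\<tau> y ! i" "\<not> ?\<tau> y ! j"
      using 3 assms by (simp_all add: nth_swap_entries)
    then have "0 \<le> ?G (?\<tau> y)"
      using true_false assms(9) by simp
    also have "?G (?\<tau> y) = ?G y"
      using assms by (simp add: swap_entries_involutory algebra_simps)
    finally show ?thesis .
  qed
qed

lemma sum_involution_double:
  fixes f :: "'a \<Rightarrow> 'b::comm_semiring_1"
  assumes "finite A" "\<And>x. x \<in> A \<Longrightarrow> \<sigma> x \<in> A" "\<And>x. x \<in> A \<Longrightarrow> \<sigma> (\<sigma> x) = x"
  shows "2 * sum f A = (\<Sum>x\<in>A. f x + f (\<sigma> x))"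
proof -
  have "sum f A = (\<Sum>x\<in>A. f (\<sigma> x))"
    by (rule sum.reindex_bij_witness[of A \<sigma> \<sigma>]) (use assms in auto)
  then show ?thesis by (simp add: sum.distrib mult_2)
qed

lemma utility_swap_diff:
  assumes "i < n" "j < n" "length s = n"
  shows "utility Psi eta n (swap_entries i j s) - utility Psi eta n s
       = (\<Sum>y\<in>{ys. length ys = n}.
            (label_prob eta n (swap_entries i j y) - label_prob eta n y)
            * metric_eval Psi n s y)"
proof -
  let ?\<tau> = "swap_entries i j"
  have "utility Psi eta n (?\<tau> s)
      = (\<Sum>y\<in>{ys. length ys = n}. label_prob eta n (?\<tau> y) * metric_eval Psi n (?\<tau> s) (?\<tau> y))"
    unfolding utility_def
    by (rule sum.reindex_bij_witness[of _ ?\<tau> ?\<tau>])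
      (use assms in \<open>auto simp: swap_entries_involutory\<close>)
  also have "\<dots> = (\<Sum>y\<in>{ys. length ys = n}. label_prob eta n (?\<tau> y) * metric_eval Psi n s y)"
    using assms by (intro sum.cong) (simp_all add: metric_eval_swap_entries)
  finally show ?thesis
    unfolding utility_def by (simp add: sum_subtractf left_diff_distrib)
qed

lemma utility_swap_gain:
  assumes "n \<ge> 1" "TP_monotonic Psi" "\<forall>k<n. eta k \<in> {0..1}"
    and "i < n" "j < n" "length s = n" "s!i" "\<not> s!j" "eta i < eta j"
  shows "utility Psi eta n s < utility Psi eta n (swap_entries i j s)"
proof -
  let ?\<tau> = "swap_entries i j"
  let ?L = "{ys :: bool list. length ys = n}"
  let ?P = "label_prob eta n" and ?M = "metric_eval Psi n s"
  let ?G = "\<lambda>y. (?P (?\<tau> y) - ?P y) * (?M y - ?M (?\<tau> y))"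
  have ij: "i \<noteq> j" using assms(7,8) by auto
  have "2 * (utility Psi eta n (?\<tau> s) - utility Psi eta n s)
      = (\<Sum>y\<in>?L. (?P (?\<tau> y) - ?P y) * ?M y + (?P (?\<tau> (?\<tau> y)) - ?P (?\<tau> y)) * ?M (?\<tau> y))"
    unfolding utility_swap_diff[OF assms(4-6)]
    using assms(4,5) by (intro sum_involution_double) (simp_all add: finite_list_length swap_entries_involutory)
  also have "\<dots> = (\<Sum>y\<in>?L. ?G y)"
    using assms(4,5) by (intro sum.cong) (simp_all add: swap_entries_involutory algebra_simps)
  also have "\<dots> > 0"
  proof (rule sum_pos2)
    \<comment> \<open>All factors of the probability of y0 outside i and j are at least 1/2.\<close>
    define y0 where "y0 = map (\<lambda>k. k = i \<or> (k \<noteq> j \<and> 1/2 \<le> eta k)) [0..<n]"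
    have y0: "length y0 = n" "y0!i" "\<not> y0!j"
      using assms(4,5) ij by (simp_all add: y0_def)
    have "0 < (\<Prod>k\<in>{..<n} - {i, j}. if y0!k then eta k else 1 - eta k)"
      by (intro prod_pos) (auto simp: y0_def)
    then have "0 < (eta j - eta i) * (\<Prod>k\<in>{..<n} - {i, j}. if y0!k then eta k else 1 - eta k)"
      using assms(9) by simp
    then show "0 < ?G y0"
      using exchange_term_sgn[OF assms(1,2,4,5) ij assms(6) y0(1) assms(7,8) y0(2,3), of eta]
      by (metis sgn_1_pos)
    show "y0 \<in> ?L" using y0(1) by simp
    show "\<And>y. y \<in> ?L \<Longrightarrow> 0 \<le> ?G y"
      using exchange_term_nonneg[OF assms(1-3) _ assms(4,5) ij assms(6)] assms(7-9) by simp
  qed (simp add: finite_list_length)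
  finally show ?thesis by simp
qed

theorem theorem1:
  fixes Psi :: "real \<Rightarrow> real \<Rightarrow> real \<Rightarrow> real \<Rightarrow> real"
    and eta :: "nat \<Rightarrow> real" and n :: nat and s :: "bool list"
  assumes "n \<ge> 1"
    and "\<forall>a b c d. a \<in> {0..1} \<and> b \<in> {0..1} \<and> c \<in> {0..1} \<and> d \<in> {0..1} \<longrightarrow> Psi a b c d \<ge> 0"
    and "TP_monotonic Psi"
    and "\<forall>i<n. eta i \<in> {0..1}"
    and "length s = n"
    and "\<forall>s'. length s' = n \<longrightarrow> utility Psi eta n s' \<le> utility Psi eta n s"
  shows "\<forall>i<n. \<forall>j<n. s!i \<and> \<not> s!j \<longrightarrow> eta i \<ge> eta j"
proof (intro allI impI)
  fix i j assume "i < n" "j < n" and "s!i \<and> \<not> s!j"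
  show "eta i \<ge> eta j"
  proof (rule ccontr)
    assume "\<not> eta i \<ge> eta j"
    then have "utility Psi eta n s < utility Psi eta n (swap_entries i j s)"
      using utility_swap_gain[OF assms(1,3,4) \<open>i < n\<close> \<open>j < n\<close> assms(5)] \<open>s!i \<and> \<not> s!j\<close>
      by simp
    then show False
      using assms(5,6) by (simp add: leD)
  qed
qed

end
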